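(* Consider Algorithm iR2N (described in the context) and suppose (A1), (A2), (A3), (A4) and (A6) hold. Define $$\sigma_{\mathrm{succ}}=\max\left(\frac{\theta_1\theta_2^2(L+\kappa_B+2\kappa_h+4\kappa_f+2\kappa_\nabla)}{(1-\theta_1)(1-\hat\eta_2)},\ \lambda^{-1}\right)>0.$$ If at iteration $k$ one has $s_k\neq 0$ and $\sigma_k\ge\sigma_{\mathrm{succ}}$, then $\hat\rho_k\ge\hat\eta_2$, i.e., iteration $k$ is very successful.
   Context: Setting. $f:\mathbb{R}^n\to\mathbb{R}$ is continuously differentiable, $h:\mathbb{R}^n\to\mathbb{R}\cup\{+\infty\}$ is proper and lower semicontinuous; the problem is $\min_x f(x)+h(x)$. $\|\cdot\|$ is the Euclidean norm (spectral norm for matrices). For each $x$, approximations $\hat f(x)\in\mathbb{R}$ of $f(x)$ and $\hat\nabla f(x)\in\mathbb{R}^n$ of $\nabla f(x)$ are available. For each $x$, $\psi(\cdot;x):\mathbb{R}^n\to\mathbb{R}\cup\{+\infty\}$ is proper, lsc, satisfies $\psi(0;x)=h(x)$ and $\partial\psi(0;x)\subseteq\partial h(x)$ ($\partial$ = limiting subdifferential), and is uniformly prox-bounded: there is $\lambda>0$ such that for every $x$ and every $0<\lambda'<\lambda$, $w\mapsto\psi(w;x)+\tfrac{1}{2\lambda'}\|w\|^2$ is bounded below. Models: $\varphi_{\mathrm{cp}}(s;x)=\hat f(x)+\hat\nabla f(x)^Ts$; $m_{\mathrm{cp}}(s;x,\nu^{-1})=\varphi_{\mathrm{cp}}(s;x)+\tfrac12\nu^{-1}\|s\|^2+\psi(s;x)$;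 for a symmetric $B(x)\in\mathbb{R}^{n\times n}$, $\varphi(s;x)=\hat f(x)+\hat\nabla f(x)^Ts+\tfrac12 s^TB(x)s$ and $m(s;x,\sigma)=\varphi(s;x)+\tfrac12\sigma\|s\|^2+\psi(s;x)$. Algorithm iR2N. Constants: $\kappa_f,\kappa_\nabla>0$, $0<\gamma_3\le 1<\gamma_1\le\gamma_2$, $0<\hat\eta_1\le\hat\eta_2<1$, $0<\theta_1<1<\theta_2$, $\sigma_{\min}>4\kappa_f\theta_1\theta_2^2/(\hat\eta_1(1-\theta_1))$, $\sigma_0\ge\sigma_{\min}$, $x_0\in\mathbb{R}^n$. At iteration $k=0,1,\dots$: choose symmetric $B_k=B(x_k)$; set $\nu_k=\theta_1/(\|B_k\|+\sigma_k)$; compute $\hat s_{k,\mathrm{cp}}$ with $m_{\mathrm{cp}}(\hat s_{k,\mathrm{cp}};x_k,\nu_k^{-1})\le m_{\mathrm{cp}}(0;x_k,\nu_k^{-1})$ (an approximate minimizer of $m_{\mathrm{cp}}(\cdot;x_k,\nu_k^{-1})$ obtained by a descent procedure from $s=0$) and set $\hat\xi_{k,\mathrm{cp}}=(\varphi_{\mathrm{cp}}+\psi)(0;x_k)-(\varphi_{\mathrm{cp}}+\psi)(\hat s_{k,\mathrm{cp}};x_k)$; compute $s_k$ with $m(s_k;x_k,\sigma_k)\le m(\hat s_{k,\mathrm{cp}};x_k,\sigma_k)$; if $\|s_k\|>\theta_2\|\hat s_{k,\mathrm{cp}}\|$, reset $s_k=\hat s_{k,\mathrm{cp}}$ (these computations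 are repeated with refined $\hat f,\hat\nabla f$ until (A6) holds). Compute $$\hat\rho_k=\frac{\hat f(x_k)+h(x_k)-\hat f(x_k+s_k)-h(x_k+s_k)}{\varphi(0;x_k)+\psi(0;x_k)-\varphi(s_k;x_k)-\psi(s_k;x_k)},$$ where $\varphi(\cdot;x_k)$ uses $B_k$. If $\hat\rho_k\ge\hat\eta_1$ (successful) set $x_{k+1}=x_k+s_k$, else $x_{k+1}=x_k$. Choose $\sigma_{k+1}\in[\gamma_3\sigma_k,\sigma_k]$ if $\hat\rho_k\ge\hat\eta_2$ (very successful), $\sigma_{k+1}\in[\sigma_k,\gamma_1\sigma_k]$ if $\hat\eta_1\le\hat\rho_k<\hat\eta_2$, $\sigma_{k+1}\in[\gamma_1\sigma_k,\gamma_2\sigma_k]$ if $\hat\rho_k<\hat\eta_1$; then reset $\sigma_{k+1}=\max(\sigma_{k+1},\sigma_{\min})$. Assumptions. (A1) $|f(x+s)-f(x)-\nabla f(x)^Ts|\le\tfrac12L\|s\|^2$ for all $x,s$, for some $L\ge0$. (A2) $\|B_k\|\le\kappa_B$ for all $k$, for some $\kappa_B>0$. (A3) $|\psi(s;x)-h(x+s)|\le\kappa_h\|s\|^2$ for all $x,s$, for some $\kappa_h>0$. (A4) For all $k$, $\varphi(0;x_k)+\psi(0;x_k)-(\varphi(s_k;x_k)+\psi(s_k;x_k))\ge(1-\theta_1)\hat\xi_{k,\mathrm{cp}}$. (A6) For all $k$: $|f(x_k)-\hat f(x_k)|\le\kappa_f\|s_k\|^2$, $|f(x_k+s_k)-\hat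 f(x_k+s_k)|\le\kappa_f\|s_k\|^2$, $\|\nabla f(x_k)-\hat\nabla f(x_k)\|\le\kappa_\nabla\|s_k\|$. *)

theory Defs
  imports "HOL-Analysis.Analysis"
begin

(* Extended-real valued functions R^n -> R \<union> {+\<infinity>} are modelled as maps into ereal
   that never take the value -\<infinity>. *)

definition proper_fun :: "('a \<Rightarrow> ereal) \<Rightarrow> bool" where
  "proper_fun g \<longleftrightarrow> (\<forall>x. g x \<noteq> -\<infinity>) \<and> (\<exists>x. g x \<noteq> \<infinity>)"

definition lsc_fun :: "('a::topological_space \<Rightarrow> ereal) \<Rightarrow> bool" where
  "lsc_fun g \<longleftrightarrow> (\<forall>x. g x \<le> Liminf (at x) g)"

(* Frechet (regular) subdifferential: v such that
   liminf_{y -> x, y \<noteq> x} (g y - g x - v.(y - x)) / |y - x| \<ge> 0, at points where g x is finite *)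
definition frechet_subdiff :: "('a::euclidean_space \<Rightarrow> ereal) \<Rightarrow> 'a \<Rightarrow> 'a set" where
  "frechet_subdiff g x = {v. \<bar>g x\<bar> \<noteq> \<infinity> \<and>
     (\<forall>e>0. \<exists>d>0. \<forall>y. norm (y - x) < d \<longrightarrow>
        g x + ereal (v \<bullet> (y - x) - e * norm (y - x)) \<le> g y)}"

definition limiting_subdiff :: "('a::euclidean_space \<Rightarrow> ereal) \<Rightarrow> 'a \<Rightarrow> 'a set" where
  "limiting_subdiff g x = {v. \<exists>xs vs. xs \<longlonglongrightarrow> x \<and> (\<lambda>j. g (xs j)) \<longlonglongrightarrow> g x \<and>
      (\<forall>j. vs j \<in> frechet_subdiff g (xs j)) \<and> vs \<longlonglongrightarrow> v}"

definition specnorm :: "real^'n^'n \<Rightarrow> real" where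
  "specnorm A = onorm (\<lambda>v. A *v v)"

definition phi_cp :: "real \<Rightarrow> real^'n \<Rightarrow> real^'n \<Rightarrow> real" where
  "phi_cp fx gx s = fx + gx \<bullet> s"

definition phi_q :: "real \<Rightarrow> real^'n \<Rightarrow> real^'n^'n \<Rightarrow> real^'n \<Rightarrow> real" where
  "phi_q fx gx Bx s = fx + gx \<bullet> s + 1/2 * (s \<bullet> (Bx *v s))"

definition m_cp :: "real \<Rightarrow> real^'n \<Rightarrow> (real^'n \<Rightarrow> ereal) \<Rightarrow> real \<Rightarrow> real^'n \<Rightarrow> ereal" where
  "m_cp fx gx psix nuinv s = ereal (phi_cp fx gx s + 1/2 * nuinv * (norm s)^2) + psix s"

definition m_q :: "real \<Rightarrow> real^'n \<Rightarrow> real^'n^'n \<Rightarrow> (real^'n \<Rightarrow> ereal) \<Rightarrow> real \<Rightarrow> real^'n \<Rightarrow> ereal" where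
  "m_q fx gx Bx psix sg s = ereal (phi_q fx gx Bx s + 1/2 * sg * (norm s)^2) + psix s"

definition xi_cp :: "real \<Rightarrow> real^'n \<Rightarrow> (real^'n \<Rightarrow> ereal) \<Rightarrow> real^'n \<Rightarrow> ereal" where
  "xi_cp fx gx psix scp = (ereal (phi_cp fx gx 0) + psix 0) - (ereal (phi_cp fx gx scp) + psix scp)"

definition model_decr :: "real \<Rightarrow> real^'n \<Rightarrow> real^'n^'n \<Rightarrow> (real^'n \<Rightarrow> ereal) \<Rightarrow> real^'n \<Rightarrow> ereal" where
  "model_decr fx gx Bx psix s = (ereal (phi_q fx gx Bx 0) + psix 0) - (ereal (phi_q fx gx Bx s) + psix s)"

(* The ratio rho_hat.  Numerator and denominator are the extended-real quantities of the paper,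
   converted to reals (they are finite under (A3)). *)
definition rho_hat :: "real \<Rightarrow> real \<Rightarrow> (real^'n \<Rightarrow> ereal) \<Rightarrow> real^'n \<Rightarrow>
     real \<Rightarrow> real^'n \<Rightarrow> real^'n^'n \<Rightarrow> (real^'n \<Rightarrow> ereal) \<Rightarrow> real^'n \<Rightarrow> real" where
  "rho_hat fx fxs h x   fx' gx Bx psix s =
     real_of_ereal ((ereal fx + h x) - (ereal fxs + h (x + s))) /
     real_of_ereal (model_decr fx' gx Bx psix s)"

definition iR2N_params :: "real \<Rightarrow> real \<Rightarrow> real \<Rightarrow> real \<Rightarrow> real \<Rightarrow> real \<Rightarrow> real \<Rightarrow> real
     \<Rightarrow> real \<Rightarrow> real \<Rightarrow> bool" where
  "iR2N_params kf kg g3 g1 g2 eta1 eta2 th1 th2 smin \<longleftrightarrow>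
     kf > 0 \<and> kg > 0 \<and> 0 < g3 \<and> g3 \<le> 1 \<and> 1 < g1 \<and> g1 \<le> g2 \<and>
     0 < eta1 \<and> eta1 \<le> eta2 \<and> eta2 < 1 \<and> 0 < th1 \<and> th1 < 1 \<and> 1 < th2 \<and>
     smin > 4 * kf * th1 * th2^2 / (eta1 * (1 - th1))"

(* The sequences generated by iR2N.  At iteration k the (possibly refined) approximations
   used are fhat k and ghat k; scp k is the Cauchy-type step, s k the final step. *)
definition iR2N_run ::
  "real \<Rightarrow> real \<Rightarrow> real \<Rightarrow> real \<Rightarrow> real \<Rightarrow> real \<Rightarrow> real \<Rightarrow> real \<Rightarrow>
   (real^'n \<Rightarrow> ereal) \<Rightarrow> (real^'n \<Rightarrow> real^'n \<Rightarrow> ereal) \<Rightarrow>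
   (nat \<Rightarrow> real^'n \<Rightarrow> real) \<Rightarrow> (nat \<Rightarrow> real^'n \<Rightarrow> real^'n) \<Rightarrow>
   (nat \<Rightarrow> real^'n^'n) \<Rightarrow> (nat \<Rightarrow> real) \<Rightarrow> (nat \<Rightarrow> real^'n) \<Rightarrow>
   (nat \<Rightarrow> real^'n) \<Rightarrow> (nat \<Rightarrow> real^'n) \<Rightarrow> bool" where
  "iR2N_run g3 g1 g2 eta1 eta2 th1 th2 smin h psi fhat ghat B sg x scp s \<longleftrightarrow>
     sg 0 \<ge> smin \<and>
     (\<forall>k. let fx = fhat k (x k); gx = ghat k (x k); psix = (\<lambda>w. psi w (x k));
             nu = th1 / (specnorm (B k) + sg k);
             rho = rho_hat (fhat k (x k)) (fhat k (x k + s k)) h (x k) fx gx (B k) psix (s k)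
         in transpose (B k) = B k \<and>
            m_cp fx gx psix (1 / nu) (scp k) \<le> m_cp fx gx psix (1 / nu) 0 \<and>
            (s k = scp k \<or>
              (m_q fx gx (B k) psix (sg k) (s k) \<le> m_q fx gx (B k) psix (sg k) (scp k) \<and>
               norm (s k) \<le> th2 * norm (scp k))) \<and>
            x (Suc k) = (if rho \<ge> eta1 then x k + s k else x k) \<and>
            (\<exists>sig'. (if rho \<ge> eta2 then g3 * sg k \<le> sig' \<and> sig' \<le> sg k
                     else if rho \<ge> eta1 then sg k \<le> sig' \<and> sig' \<le> g1 * sg k
                     else g1 * sg k \<le> sig' \<and> sig' \<le> g2 * sg k) \<and>
                    sg (Suc k) = max sig' smin))"

end

theory Submission
  imports Defs
begin

(* The model decrease dominates (1 - th1) xi_cp, and the Cauchy condition gives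
   xi_cp >= nu^-1 |s_cp|^2 / 2; as nu^-1 >= sigma / th1 and |s| <= th2 |s_cp|, the model
   decrease grows like sigma |s|^2. On the other hand (A1), (A2), (A3) and (A6) bound the gap
   between predicted and actual decrease by C |s|^2 / 2 with C independent of sigma, so once
   sigma reaches sigma_succ the ratio rho exceeds eta2. *)

lemma specnorm_nonneg: "0 \<le> specnorm A"
  unfolding specnorm_def by (rule onorm_pos_le) simp

lemma norm_mult_vec_le_specnorm: "norm (A *v v) \<le> specnorm A * norm v"
  unfolding specnorm_def by (rule onorm) simp

lemma abs_quadratic_form_le_specnorm: "\<bar>v \<bullet> (A *v v)\<bar> \<le> specnorm A * (norm v)\<^sup>2"
proof -
  have "\<bar>v \<bullet> (A *v v)\<bar> \<le> norm v * norm (A *v v)" by (rule Cauchy_Schwarz_ineq2)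
  also have "\<dots> \<le> norm v * (specnorm A * norm v)"
    by (intro mult_left_mono norm_mult_vec_le_specnorm) simp
  finally show ?thesis by (simp add: power2_eq_square mult_ac)
qed

(* In ereal, \<infinity> - \<infinity> = \<infinity>, so (A3) at v = 0 forces h, and then psi, to be real-valued. *)
lemma finite_if_model_error_bounded:
  fixes h :: "'a::real_normed_vector \<Rightarrow> ereal" and psi :: "'a \<Rightarrow> 'a \<Rightarrow> ereal"
  assumes psi_0: "\<forall>y. psi 0 y = h y"
    and err: "\<forall>y v. \<bar>psi v y - h (y + v)\<bar> \<le> ereal (kh * (norm v)\<^sup>2)"
  shows "\<bar>h y\<bar> \<noteq> \<infinity>" and "\<bar>psi v y\<bar> \<noteq> \<infinity>"
proof -
  show h_fin: "\<bar>h y\<bar> \<noteq> \<infinity>" for y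
  proof -
    have "\<bar>psi 0 y - h (y + 0)\<bar> \<le> ereal (kh * (norm (0::'a))\<^sup>2)" using err by blast
    then show ?thesis using psi_0 by (cases "h y") auto
  qed
  have "\<bar>psi v y - h (y + v)\<bar> \<le> ereal (kh * (norm v)\<^sup>2)" using err by blast
  then show "\<bar>psi v y\<bar> \<noteq> \<infinity>"
    using h_fin[of "y + v"] by (cases "psi v y"; cases "h (y + v)") auto
qed

lemma model_decr_ereal:
  "model_decr fx gx Bx (\<lambda>w. ereal (p w)) s
     = ereal (phi_q fx gx Bx 0 + p 0 - (phi_q fx gx Bx s + p s))"
  by (simp add: model_decr_def)

lemma rho_hat_ereal:
  "rho_hat fx fxs (\<lambda>y. ereal (hr y)) x fx' gx Bx (\<lambda>w. ereal (p w)) s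
     = (fx + hr x - (fxs + hr (x + s))) / (phi_q fx' gx Bx 0 + p 0 - (phi_q fx' gx Bx s + p s))"
  by (simp add: rho_hat_def model_decr_def)

lemma xi_cp_ge_if_m_cp_le:
  assumes cauchy: "m_cp fx gx psix nuinv c \<le> m_cp fx gx psix nuinv 0"
    and psix_0: "\<bar>psix 0\<bar> \<noteq> \<infinity>"
  shows "ereal (nuinv / 2 * (norm c)\<^sup>2) \<le> xi_cp fx gx psix c"
proof -
  obtain a where a: "psix 0 = ereal a" using psix_0 by (cases "psix 0") auto
  show ?thesis
  proof (cases "psix c")
    case (real r)
    then show ?thesis using cauchy a by (simp add: m_cp_def xi_cp_def phi_cp_def)
  next
    case PInf
    then show ?thesis using cauchy a by (simp add: m_cp_def)
  next
    case MInf
    then show ?thesis using a by (simp add: xi_cp_def)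
  qed
qed

lemma model_decr_ge_sigma_norm_sq:
  assumes decr: "ereal (1 - th1) * xi_cp fx gx psix c \<le> model_decr fx gx Bx psix s"
    and cauchy: "m_cp fx gx psix nuinv c \<le> m_cp fx gx psix nuinv 0"
    and psix_0: "\<bar>psix 0\<bar> \<noteq> \<infinity>"
    and nuinv: "sg / th1 \<le> nuinv" and step: "norm s \<le> th2 * norm c"
    and "0 \<le> sg" "0 < th1" "th1 < 1" "0 < th2"
  shows "ereal ((1 - th1) * sg / (2 * th1 * th2\<^sup>2) * (norm s)\<^sup>2) \<le> model_decr fx gx Bx psix s"
proof -
  have "(norm s)\<^sup>2 \<le> th2\<^sup>2 * (norm c)\<^sup>2"
    using step by (metis norm_ge_zero power_mono power_mult_distrib)
  then have "sg / (2 * th1 * th2\<^sup>2) * (norm s)\<^sup>2 \<le> sg / th1 / 2 * (norm c)\<^sup>2"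
    using assms(6-) by (simp add: field_simps mult_left_mono)
  also have "\<dots> \<le> nuinv / 2 * (norm c)\<^sup>2"
    using nuinv by (intro mult_right_mono divide_right_mono) auto
  finally have "ereal (sg / (2 * th1 * th2\<^sup>2) * (norm s)\<^sup>2) \<le> xi_cp fx gx psix c"
    using xi_cp_ge_if_m_cp_le[OF cauchy psix_0] by (meson ereal_less_eq(3) order_trans)
  then have "ereal (1 - th1) * ereal (sg / (2 * th1 * th2\<^sup>2) * (norm s)\<^sup>2)
      \<le> ereal (1 - th1) * xi_cp fx gx psix c"
    using \<open>th1 < 1\<close> by (intro ereal_mult_left_mono) auto
  with decr show ?thesis by (simp add: mult.assoc)
qed

lemma actual_minus_model_decrease_le:
  fixes f :: "real^'n \<Rightarrow> real" and hr p :: "real^'n \<Rightarrow> real"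
  assumes taylor: "\<bar>f (x + s) - f x - gradf x \<bullet> s\<bar> \<le> 1/2 * L * (norm s)\<^sup>2"
    and hess: "specnorm Bx \<le> kB"
    and p_0: "p 0 = hr x" and p_err: "\<bar>p s - hr (x + s)\<bar> \<le> kh * (norm s)\<^sup>2"
    and f_err: "\<bar>f x - fx\<bar> \<le> kf * (norm s)\<^sup>2" "\<bar>f (x + s) - fxs\<bar> \<le> kf * (norm s)\<^sup>2"
    and grad_err: "norm (gradf x - gx) \<le> kg * norm s"
  shows "(phi_q fx gx Bx 0 + p 0 - (phi_q fx gx Bx s + p s)) - (fx + hr x - (fxs + hr (x + s)))
           \<le> (L + kB + 2 * kh + 4 * kf + 2 * kg) / 2 * (norm s)\<^sup>2"
proof -
  have "\<bar>(gradf x - gx) \<bullet> s\<bar> \<le> kg * (norm s)\<^sup>2"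
  proof -
    have "\<bar>(gradf x - gx) \<bullet> s\<bar> \<le> norm (gradf x - gx) * norm s" by (rule Cauchy_Schwarz_ineq2)
    also have "\<dots> \<le> kg * norm s * norm s" using grad_err by (intro mult_right_mono) auto
    finally show ?thesis by (simp add: power2_eq_square)
  qed
  moreover have "\<bar>s \<bullet> (Bx *v s)\<bar> \<le> kB * (norm s)\<^sup>2"
    using abs_quadratic_form_le_specnorm[of s Bx] hess
    by (meson order_trans mult_right_mono zero_le_power2)
  moreover have "gradf x \<bullet> s = gx \<bullet> s + (gradf x - gx) \<bullet> s"
    by (simp add: inner_diff_left)
  ultimately show ?thesis
    using taylor p_0 p_err f_err unfolding phi_q_def abs_le_iff by (simp add: field_simps)
qed

lemma ratio_ge_if_model_decrease_dominates:
  fixes N D S sg th1 th2 eta C :: real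
  assumes decr: "(1 - th1) * sg / (2 * th1 * th2\<^sup>2) * S \<le> D"
    and gap: "D - N \<le> C / 2 * S"
    and sigma: "th1 * th2\<^sup>2 * C / ((1 - th1) * (1 - eta)) \<le> sg"
    and "0 < S" "0 < sg" "0 < th1" "th1 < 1" "0 < th2" "eta < 1"
  shows "eta \<le> N / D"
proof -
  define K where "K = (1 - th1) * sg / (2 * th1 * th2\<^sup>2)"
  have "0 < K" unfolding K_def using assms(4-) by simp
  then have "0 < D" using decr \<open>0 < S\<close> unfolding K_def[symmetric] by (smt (verit) mult_pos_pos)
  have "th1 * th2\<^sup>2 * C \<le> sg * ((1 - th1) * (1 - eta))"
    using sigma assms(4-) by (simp add: pos_divide_le_eq)
  then have "C / 2 \<le> (1 - eta) * K"
    using assms(4-) unfolding K_def by (simp add: field_simps)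
  then have "C / 2 * S \<le> (1 - eta) * (K * S)"
    using \<open>0 < S\<close> by (metis mult.assoc mult_right_mono less_imp_le)
  also have "\<dots> \<le> (1 - eta) * D"
    using decr \<open>eta < 1\<close> unfolding K_def[symmetric] by (intro mult_left_mono) auto
  finally have "eta * D \<le> N" using gap by (simp add: algebra_simps)
  then show ?thesis using \<open>0 < D\<close> by (simp add: pos_le_divide_eq)
qed

lemma iR2N_run_step_conditions:
  assumes run: "iR2N_run g3 g1 g2 eta1 eta2 th1 th2 smin h psi fhat ghat B sg x scp s"
    and "1 \<le> th2"
  shows "m_cp (fhat k (x k)) (ghat k (x k)) (\<lambda>w. psi w (x k)) ((specnorm (B k) + sg k) / th1) (scp k)
           \<le> m_cp (fhat k (x k)) (ghat k (x k)) (\<lambda>w. psi w (x k)) ((specnorm (B k) + sg k) / th1) 0"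
    and "norm (s k) \<le> th2 * norm (scp k)"
  using run[unfolded iR2N_run_def Let_def, THEN conjunct2, THEN spec[of _ k]] \<open>1 \<le> th2\<close>
  by (auto simp: mult_le_cancel_right1)

theorem lemma3p3:
  fixes f :: "real^'n \<Rightarrow> real" and gradf :: "real^'n \<Rightarrow> real^'n"
    and h :: "real^'n \<Rightarrow> ereal" and psi :: "real^'n \<Rightarrow> real^'n \<Rightarrow> ereal"
    and lam :: real
    and kf kg g3 g1 g2 eta1 eta2 th1 th2 smin L kB kh :: real
    and fhat :: "nat \<Rightarrow> real^'n \<Rightarrow> real" and ghat :: "nat \<Rightarrow> real^'n \<Rightarrow> real^'n"
    and B :: "nat \<Rightarrow> real^'n^'n" and sg :: "nat \<Rightarrow> real"
    and x scp s :: "nat \<Rightarrow> real^'n" and k :: nat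
  assumes f_C1: "\<forall>y. (f has_derivative (\<lambda>v. gradf y \<bullet> v)) (at y)" "continuous_on UNIV gradf"
    and h_proper: "proper_fun h" and h_lsc: "lsc_fun h"
    and psi_proper: "\<forall>y. proper_fun (\<lambda>w. psi w y)"
    and psi_lsc: "\<forall>y. lsc_fun (\<lambda>w. psi w y)"
    and psi_0: "\<forall>y. psi 0 y = h y"
    and psi_subdiff: "\<forall>y. limiting_subdiff (\<lambda>w. psi w y) 0 \<subseteq> limiting_subdiff h y"
    and prox_bdd: "lam > 0" "\<forall>y lam'. 0 < lam' \<and> lam' < lam \<longrightarrow>
                      (\<exists>c::real. \<forall>w. ereal c \<le> psi w y + ereal ((norm w)^2 / (2 * lam')))"
    and params: "iR2N_params kf kg g3 g1 g2 eta1 eta2 th1 th2 smin"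
    and run: "iR2N_run g3 g1 g2 eta1 eta2 th1 th2 smin h psi fhat ghat B sg x scp s"
    and A1: "L \<ge> 0" "\<forall>y v. \<bar>f (y + v) - f y - gradf y \<bullet> v\<bar> \<le> 1/2 * L * (norm v)^2"
    and A2: "kB > 0" "\<forall>j. specnorm (B j) \<le> kB"
    and A3: "kh > 0" "\<forall>y v. \<bar>psi v y - h (y + v)\<bar> \<le> ereal (kh * (norm v)^2)"
    and A4: "\<forall>j. model_decr (fhat j (x j)) (ghat j (x j)) (B j) (\<lambda>w. psi w (x j)) (s j)
                 \<ge> ereal (1 - th1) * xi_cp (fhat j (x j)) (ghat j (x j)) (\<lambda>w. psi w (x j)) (scp j)"
    and A6: "\<forall>j. \<bar>f (x j) - fhat j (x j)\<bar> \<le> kf * (norm (s j))^2 \<and>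
                 \<bar>f (x j + s j) - fhat j (x j + s j)\<bar> \<le> kf * (norm (s j))^2 \<and>
                 norm (gradf (x j) - ghat j (x j)) \<le> kg * norm (s j)"
    and s_nz: "s k \<noteq> 0"
    and sigma_big: "sg k \<ge> max (th1 * th2^2 * (L + kB + 2 * kh + 4 * kf + 2 * kg)
                                    / ((1 - th1) * (1 - eta2))) (1 / lam)"
  shows "rho_hat (fhat k (x k)) (fhat k (x k + s k)) h (x k)
           (fhat k (x k)) (ghat k (x k)) (B k) (\<lambda>w. psi w (x k)) (s k) \<ge> eta2"
proof -
  define hr where "hr y = real_of_ereal (h y)" for y
  define p where "p w = real_of_ereal (psi w (x k))" for w
  have h_eq: "h y = ereal (hr y)" for y
    using finite_if_model_error_bounded(1)[OF psi_0 A3(2)] by (simp add: hr_def ereal_real')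
  have psi_eq: "psi w (x k) = ereal (p w)" for w
    using finite_if_model_error_bounded(2)[OF psi_0 A3(2)] by (simp add: p_def ereal_real')
  let ?fx = "fhat k (x k)" and ?gx = "ghat k (x k)"
  let ?pred = "phi_q ?fx ?gx (B k) 0 + p 0 - (phi_q ?fx ?gx (B k) (s k) + p (s k))"
  let ?ared = "?fx + hr (x k) - (fhat k (x k + s k) + hr (x k + s k))"
  have th: "0 < th1" "th1 < 1" "1 \<le> th2" "eta2 < 1"
    using params unfolding iR2N_params_def by auto
  have sigma: "th1 * th2\<^sup>2 * (L + kB + 2 * kh + 4 * kf + 2 * kg) / ((1 - th1) * (1 - eta2)) \<le> sg k"
    and "1 / lam \<le> sg k"
    using sigma_big by auto
  then have sg_pos: "0 < sg k"
    using prox_bdd(1) by (meson divide_pos_pos order_less_le_trans zero_less_one)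
  have nuinv: "sg k / th1 \<le> (specnorm (B k) + sg k) / th1"
    using specnorm_nonneg[of "B k"] th by (simp add: divide_right_mono)
  have decr: "(1 - th1) * sg k / (2 * th1 * th2\<^sup>2) * (norm (s k))\<^sup>2 \<le> ?pred"
    using model_decr_ge_sigma_norm_sq[OF A4[rule_format, of k]
        iR2N_run_step_conditions(1)[OF run th(3)] _ nuinv iR2N_run_step_conditions(2)[OF run th(3)]]
      sg_pos th by (simp add: psi_eq model_decr_ereal)
  have gap: "?pred - ?ared \<le> (L + kB + 2 * kh + 4 * kf + 2 * kg) / 2 * (norm (s k))\<^sup>2"
  proof (rule actual_minus_model_decrease_le)
    show "p 0 = hr (x k)"
      using psi_0 by (metis h_eq psi_eq ereal.inject)
    show "\<bar>p (s k) - hr (x k + s k)\<bar> \<le> kh * (norm (s k))\<^sup>2"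
      using A3(2) by (metis h_eq psi_eq abs_ereal.simps(1) ereal_minus(1) ereal_less_eq(3))
  qed (use A1(2) A2(2) A6 in auto)
  show ?thesis
    unfolding h_eq[abs_def] psi_eq rho_hat_ereal
    using ratio_ge_if_model_decrease_dominates[OF decr gap sigma] sg_pos th s_nz by simp
qed

end
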